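(* Let $b\ge1$, $c_{\mathrm{ov}}\ge0$, $c_i>0$, $c_i^\sharp\ge0$, $d_i:=c_{\mathrm{ov}}+\sum_{j\ge i}(c_j+c_j^\sharp)$, $L^1_{i,\{k,\dots,b\}}\ge0$, and consider the program $\min\sum_id_iq_i$ subject to $q\ge0$ and $g_i(q):=\left(\sum_{s=1}^iq_s\right)^2-\sum_{s=1}^iq_sL^1_{i,\{s,\dots,b\}}\ge0$ for $i\in[b]$. Let $q^\star$ be a KKT point, i.e. $q^\star$ is feasible and there are $\lambda_i,\eta_i\ge0$ with $0=d_k-\sum_{i=k}^b\lambda_i\big(2\sum_{s=1}^iq^\star_s-L^1_{i,\{k,\dots,b\}}\big)-\eta_k$ for all $k$, $\lambda_ig_i(q^\star)=0$ and $\eta_iq_i^\star=0$ for all $i$. If $\{j:q^\star_j>0\}=\{k\}$, then $$q^\star_k=\max_{i\ge k}L^1_{i,\{k,\dots,b\}}.$$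
   Context: This program is a reformulation of the cost minimization for randomized progressive training under layer-wise $(L^0,L^1)$-smoothness. *)

theory Defs
  imports Complex_Main
begin

text \<open>Indices range over [b] = {1..b}. L1 i k stands for L^1_{i,{k,...,b}}.\<close>

definition dcoef :: "nat \<Rightarrow> real \<Rightarrow> (nat \<Rightarrow> real) \<Rightarrow> (nat \<Rightarrow> real) \<Rightarrow> nat \<Rightarrow> real" where
  "dcoef b cov c cs i = cov + (\<Sum>j=i..b. c j + cs j)"

definition gcon :: "nat \<Rightarrow> (nat \<Rightarrow> nat \<Rightarrow> real) \<Rightarrow> (nat \<Rightarrow> real) \<Rightarrow> nat \<Rightarrow> real" where
  "gcon b L1 q i = (\<Sum>s=1..i. q s)^2 - (\<Sum>s=1..i. q s * L1 i s)"

end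

theory Submission
  imports Defs
begin

text \<open>If q is supported on the single block k, then for every i \<ge> k the constraint
  g_i(q) collapses to q_k (q_k - L1 i k), so feasibility gives q_k \<ge> L1 i k.
  Since q_k > 0 forces \<eta>_k = 0 and d_k > 0, stationarity at k needs some multiplier
  \<lambda>_i with i \<ge> k to be nonzero; complementary slackness then makes g_i(q) = 0,
  i.e. q_k = L1 i k, so the bound is attained.\<close>

lemma sum_single_support:
  fixes f :: "'a \<Rightarrow> 'b::comm_monoid_add"
  assumes "finite A" "k \<in> A" "\<forall>s\<in>A. s \<noteq> k \<longrightarrow> f s = 0"
  shows "sum f A = f k"
proof -
  have "sum f {k} = sum f A"
    by (rule sum.mono_neutral_left) (use assms in auto)
  then show ?thesis by simp
qed

lemma gcon_single_support:
  assumes "k \<in> {1..i}" "\<forall>s\<in>{1..i}. s \<noteq> k \<longrightarrow> q s = 0"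
  shows "gcon b L1 q i = q k * (q k - L1 i k)"
proof -
  have "(\<Sum>s=1..i. q s) = q k"
    using assms by (intro sum_single_support) auto
  moreover have "(\<Sum>s=1..i. q s * L1 i s) = q k * L1 i k"
    using assms by (intro sum_single_support) auto
  ultimately show ?thesis
    unfolding gcon_def by (simp add: power2_eq_square algebra_simps)
qed

lemma dcoef_pos:
  assumes "cov \<ge> 0" "m \<le> b" "\<forall>j\<in>{m..b}. c j > 0" "\<forall>j\<in>{m..b}. cs j \<ge> 0"
  shows "dcoef b cov c cs m > 0"
proof -
  have terms_pos: "c j + cs j > 0" if "j \<in> {m..b}" for j
    using assms(3,4) that by (simp add: add_pos_nonneg)
  have "c m + cs m \<le> (\<Sum>j=m..b. c j + cs j)"
    using terms_pos by (intro member_le_sum) (auto simp: less_imp_le assms(2))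
  moreover have "c m + cs m > 0"
    using terms_pos assms(2) by simp
  ultimately show ?thesis
    unfolding dcoef_def using assms(1) by linarith
qed

theorem lemma5:
  fixes b :: nat and cov :: real and c cs q lam eta :: "nat \<Rightarrow> real"
    and L1 :: "nat \<Rightarrow> nat \<Rightarrow> real" and k :: nat
  assumes hb: "b \<ge> 1"
    and hcov: "cov \<ge> 0"
    and hc: "\<forall>i\<in>{1..b}. c i > 0"
    and hcs: "\<forall>i\<in>{1..b}. cs i \<ge> 0"
    and hL: "\<forall>i\<in>{1..b}. \<forall>j\<in>{1..b}. L1 i j \<ge> 0"
    and feas_q: "\<forall>i\<in>{1..b}. q i \<ge> 0"
    and feas_g: "\<forall>i\<in>{1..b}. gcon b L1 q i \<ge> 0"
    and lam_nn: "\<forall>i\<in>{1..b}. lam i \<ge> 0"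
    and eta_nn: "\<forall>i\<in>{1..b}. eta i \<ge> 0"
    and stat: "\<forall>m\<in>{1..b}. 0 = dcoef b cov c cs m
                 - (\<Sum>i=m..b. lam i * (2 * (\<Sum>s=1..i. q s) - L1 i m)) - eta m"
    and comp_g: "\<forall>i\<in>{1..b}. lam i * gcon b L1 q i = 0"
    and comp_q: "\<forall>i\<in>{1..b}. eta i * q i = 0"
    and supp: "{j\<in>{1..b}. q j > 0} = {k}"
  shows "q k = Max ((\<lambda>i. L1 i k) ` {k..b})"
proof -
  have k: "k \<in> {1..b}" and qk: "q k > 0"
    using supp by blast+
  have "q s = 0" if "s \<in> {1..b}" "s \<noteq> k" for s
    using supp feas_q that by (metis (mono_tags, lifting) mem_Collect_eq order_le_less singletonD)
  then have g: "gcon b L1 q i = q k * (q k - L1 i k)" if "i \<in> {k..b}" for i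
    using k that by (intro gcon_single_support) auto
  have bound: "L1 i k \<le> q k" if "i \<in> {k..b}" for i
  proof -
    have "i \<in> {1..b}"
      using that k by simp
    then have "0 \<le> q k * (q k - L1 i k)"
      using feas_g g[OF that] by metis
    then show ?thesis
      using qk by (simp add: zero_le_mult_iff)
  qed
  have "dcoef b cov c cs k > 0"
    using hcov k hc hcs by (intro dcoef_pos) auto
  moreover have "eta k = 0"
    using comp_q[rule_format, OF k] qk by simp
  ultimately have "(\<Sum>i=k..b. lam i * (2 * (\<Sum>s=1..i. q s) - L1 i k)) \<noteq> 0"
    using stat[rule_format, OF k] by linarith
  then obtain i where i: "i \<in> {k..b}" "lam i \<noteq> 0"
    by (rule sum.not_neutral_contains_not_neutral) auto
  moreover have "lam i * gcon b L1 q i = 0"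
    using comp_g i(1) k by simp
  ultimately have "gcon b L1 q i = 0"
    by simp
  then have "q k = L1 i k"
    using g[OF i(1)] qk by simp
  then show ?thesis
    using bound i(1) by (intro Max_eqI[symmetric]) auto
qed

end
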